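(* Let $t_{\mathrm f}>0$ be fixed. Consider a two-mode semi-Markov jump linear system with modes $a$ and $b$ (the process alternates $a\to b\to a\to\cdots$). Mode $a$ has dynamics $(A_1(t),B_1(t))$, control gain $\Gamma_1(t)$ and weights $(Q_1(t),R_1(t),S_1)$; mode $b$ has $(A_2(t),B_2(t))$, $\Gamma_2(t)$, $(Q_2(t),R_2(t),S_2)$, where the gains are given bounded piecewise continuous functions. The holding time of mode $a$ is modeled by an $m$-phase phase-type model $(\Pi_a,\eta_a,\alpha_a)$ and that of mode $b$ by a $p$-phase phase-type model $(\Pi_b,\eta_b,\alpha_b)$, with $\eta_a=-\Pi_a\mathbf 1_m$, $\eta_b=-\Pi_b\mathbf 1_p$, $\alpha_a=[1,0,\dots,0]^\top\in\mathbb R^m$, $\alpha_b=[1,0,\dots,0]^\top\in\mathbb R^p$, $m,p$ arbitrary finite. The Markovianized jump process is the Markov chain on $\{1,\dots,m+p\}$ with transition rate matrix $$\bar\Pi=\begin{bmatrix}\Pi_a&\eta_a\alpha_b^\top\\ \eta_b\alpha_a^\top&\Pi_b\end{bmatrix},$$ states $1,\dots,m$ carrying the data of mode $a$ (index $1$) and states $m+1,\dots,m+p$ the data of mode $b$ (index $2$). Let $\bar A_\ell=A_\ell+B_\ell\Gamma_\ell$, $L_\ell=Q_\ell+\Gamma_\ell^\top R_\ell\Gamma_\ell$ ($\ell=1,2$), and let $\Lambda_i$, $i=1,\dots,m+p$, solve $$-\dot\Lambda_i=\bar A_{\ell(i)}^\top\Lambda_i+\Lambda_i\bar A_{\ell(i)}+L_{\ell(i)}+\sum_{j=1}^{m+p}\pi_{ij}\Lambda_j,\qquad\Lambda_i(t_{\mathrm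 f})=S_{\ell(i)},$$ where $\ell(i)=1$ for $i\le m$ and $\ell(i)=2$ otherwise, and $\bar\Pi=[\pi_{ij}]$. Then for all $t\in[0,t_{\mathrm f}]$, $$\Lambda_1(t)=\bar F_a(t_{\mathrm f}-t)\Phi_{\bar A_1}^\top(t_{\mathrm f},t)S_1\Phi_{\bar A_1}(t_{\mathrm f},t)+\int_t^{t_{\mathrm f}}\bar F_a(\tau-t)\Phi_{\bar A_1}^\top(\tau,t)L_1(\tau)\Phi_{\bar A_1}(\tau,t)d\tau+\int_t^{t_{\mathrm f}}f_a(\tau-t)\Phi_{\bar A_1}^\top(\tau,t)\Lambda_{m+1}(\tau)\Phi_{\bar A_1}(\tau,t)d\tau,$$ $$\Lambda_{m+1}(t)=\bar F_b(t_{\mathrm f}-t)\Phi_{\bar A_2}^\top(t_{\mathrm f},t)S_2\Phi_{\bar A_2}(t_{\mathrm f},t)+\int_t^{t_{\mathrm f}}\bar F_b(\tau-t)\Phi_{\bar A_2}^\top(\tau,t)L_2(\tau)\Phi_{\bar A_2}(\tau,t)d\tau+\int_t^{t_{\mathrm f}}f_b(\tau-t)\Phi_{\bar A_2}^\top(\tau,t)\Lambda_1(\tau)\Phi_{\bar A_2}(\tau,t)d\tau,$$ where $f_a(t)=\alpha_a^\top e^{\Pi_a t}\eta_a$, $\bar F_a(t)=\alpha_a^\top e^{\Pi_a t}\mathbf 1_m$, $f_b(t)=\alpha_b^\top e^{\Pi_b t}\eta_b$, $\bar F_b(t)=\alpha_b^\top e^{\Pi_b t}\mathbf 1_p$ are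 the pdfs and complementary cdfs of the holding times of modes $a$ and $b$.
   Context: A phase-type model $(\Pi,\eta,\alpha)$ with $m$ phases consists of a sub-generator matrix $\Pi\in\mathbb R^{m\times m}$ (invertible, nonnegative off-diagonal entries, negative diagonal entries, nonpositive row sums), exit vector $\eta=-\Pi\mathbf 1_m\ge0$ and starting vector $\alpha\ge0$; it describes the absorption time of a Markov chain with transient states $1,\dots,m$. $\mathbf 1_m$ is the all-ones vector. $\Phi_{M}(t,\tau)$ denotes the state transition matrix of $\dot z=M(t)z$, i.e. $\partial_t\Phi_M(t,\tau)=M(t)\Phi_M(t,\tau)$, $\Phi_M(\tau,\tau)=I$. *)

theory Defs
  imports "HOL-Analysis.Analysis"
begin

definition mat_exp :: "real^'m^'m \<Rightarrow> real^'m^'m" where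
  "mat_exp M = (\<Sum>k. (1 / fact k) *\<^sub>R (((**) M) ^^ k) (mat 1))"

definition bpc_on :: "real \<Rightarrow> real \<Rightarrow> (real \<Rightarrow> 'a::real_normed_vector) \<Rightarrow> bool" where
  "bpc_on a b f \<longleftrightarrow> bounded (f ` {a..b}) \<and>
     (\<exists>D. finite D \<and> D \<subseteq> {a..b} \<and> continuous_on ({a..b} - D) f \<and>
        (\<forall>d\<in>D. (a < d \<longrightarrow> (\<exists>l. (f \<longlongrightarrow> l) (at_left d))) \<and>
                 (d < b \<longrightarrow> (\<exists>l. (f \<longlongrightarrow> l) (at_right d)))))"

definition state_trans :: "(real \<Rightarrow> real^'n^'n) \<Rightarrow> real \<Rightarrow> real \<Rightarrow> real^'n^'n" where
  "state_trans M t \<tau> = (THE Y. \<exists>X. X \<tau> = mat 1 \<and> X t = Y \<and>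
       continuous_on (closed_segment \<tau> t) X \<and>
       (\<exists>D. finite D \<and> (\<forall>s\<in>closed_segment \<tau> t - D.
            (X has_vector_derivative (M s ** X s)) (at s within closed_segment \<tau> t))))"

definition subgenerator :: "real^'m^'m \<Rightarrow> bool" where
  "subgenerator P \<longleftrightarrow> invertible P \<and>
     (\<forall>i j. i \<noteq> j \<longrightarrow> P $ i $ j \<ge> 0) \<and> (\<forall>i. P $ i $ i < 0) \<and>
     (\<forall>i. (\<Sum>j\<in>UNIV. P $ i $ j) \<le> 0)"

definition exit_vec :: "real^'m^'m \<Rightarrow> real^'m" where
  "exit_vec P = - (P *v vec 1)"

text \<open>First unit vector [1,0,...,0]; phases are ordered by a well-order on the index type.\<close>
definition first_phase :: "'m::{finite,wellorder}" where
  "first_phase = (LEAST i. True)"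

definition first_unit :: "real^'m::{finite,wellorder}" where
  "first_unit = axis first_phase 1"

definition ph_pdf :: "real^'m^'m \<Rightarrow> real^'m \<Rightarrow> real \<Rightarrow> real" where
  "ph_pdf P \<alpha> t = \<alpha> \<bullet> (mat_exp (t *\<^sub>R P) *v exit_vec P)"

definition ph_ccdf :: "real^'m^'m \<Rightarrow> real^'m \<Rightarrow> real \<Rightarrow> real" where
  "ph_ccdf P \<alpha> t = \<alpha> \<bullet> (mat_exp (t *\<^sub>R P) *v vec 1)"

text \<open>Transition rate matrix of the Markovianized process on the states
  Inl 1..m (mode a) and Inr 1..p (mode b).\<close>
definition pibar :: "real^'m^'m \<Rightarrow> real^'m \<Rightarrow> real^'p^'p \<Rightarrow> real^'p \<Rightarrow> real^('m+'p)^('m+'p)" where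
  "pibar Pa \<alpha>a Pb \<alpha>b = (\<chi> i j. case (i, j) of
       (Inl r, Inl c) \<Rightarrow> Pa $ r $ c
     | (Inl r, Inr c) \<Rightarrow> exit_vec Pa $ r * \<alpha>b $ c
     | (Inr r, Inl c) \<Rightarrow> exit_vec Pb $ r * \<alpha>a $ c
     | (Inr r, Inr c) \<Rightarrow> Pb $ r $ c)"

end

theory Submission
  imports Defs
begin

text \<open>
  Fix \<open>t\<close> and a mode with closed-loop matrix \<open>M\<close>, let \<open>\<Phi>(s) = \<Phi>\<^sub>M(s,t)\<close> and let
  \<open>w(s)\<close> be the first row of \<open>e\<^bsup>\<Pi>(s - t)\<^esup>\<close>, so that \<open>w' = w \<Pi>\<close>. In the derivative of
  \<open>Z(s) = \<Phi>(s)\<^sup>T (\<Sum>\<^sub>c w\<^sub>c(s) \<Lambda>\<^sub>c(s)) \<Phi>(s)\<close> the coupling between the phases of the mode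
  cancels against \<open>w' = w \<Pi>\<close> and the Lyapunov terms cancel against \<open>\<Phi>' = M \<Phi>\<close>. What is left
  is \<open>-\<Phi>\<^sup>T (F L + f \<Lambda>') \<Phi>\<close>, where \<open>F = \<Sum>\<^sub>c w\<^sub>c\<close> and \<open>f = \<Sum>\<^sub>c w\<^sub>c \<eta>\<^sub>c\<close> are the ccdf and the pdf
  of the holding time and \<open>\<Lambda>'\<close> is the first phase of the other mode, reached through the
  exit vector. Integrating from \<open>t\<close> to \<open>t\<^sub>f\<close>, with \<open>Z(t) = \<Lambda>\<^sub>1(t)\<close> and
  \<open>Z(t\<^sub>f) = F(t\<^sub>f - t) \<Phi>\<^sup>T S \<Phi>\<close>, gives the formula.

  The transition matrix of the bounded, piecewise continuous coefficient comes from Picard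
  iteration; it is unique because the transposed solution of the adjoint equation
  \<open>U' = -M\<^sup>T U\<close> inverts every solution.
\<close>

section \<open>Matrix algebra\<close>

lemma bounded_bilinear_matrix_matrix_mult:
  "bounded_bilinear ((**) :: real^'n^'m \<Rightarrow> real^'k^'n \<Rightarrow> real^'k^'m)"
  unfolding bilinear_conv_bounded_bilinear[symmetric] bilinear_def
  by (auto intro!: linearI simp: matrix_add_ldistrib vec_eq_iff matrix_matrix_mult_def
      sum_distrib_left algebra_simps sum.distrib)

interpretation matrix_mult: bounded_bilinear "(**) :: real^'n^'m \<Rightarrow> real^'k^'n \<Rightarrow> real^'k^'m"
  by (rule bounded_bilinear_matrix_matrix_mult)

lemma bounded_linear_transpose: "bounded_linear (transpose :: real^'n^'m \<Rightarrow> real^'m^'n)"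
  by (intro linear_conv_bounded_linear[THEN iffD1] linearI) (auto simp: transpose_def vec_eq_iff)

lemma (in bounded_bilinear) bounded_image:
  assumes "bounded (f ` S)" "bounded (g ` S)"
  shows "bounded ((\<lambda>x. prod (f x) (g x)) ` S)"
proof -
  obtain K where K: "K > 0" "\<And>a b. norm (prod a b) \<le> norm a * norm b * K"
    using pos_bounded by blast
  obtain Bf Bg where Bf: "\<forall>x\<in>S. norm (f x) \<le> Bf" and Bg: "\<forall>x\<in>S. norm (g x) \<le> Bg"
    and "Bf > 0" "Bg > 0"
    using assms by (auto simp: bounded_pos)
  have "norm (prod (f x) (g x)) \<le> Bf * Bg * K" if "x \<in> S" for x
  proof -
    have "norm (prod (f x) (g x)) \<le> norm (f x) * norm (g x) * K" by (rule K(2))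
    also have "\<dots> \<le> Bf * Bg * K"
      using Bf Bg that K(1) \<open>Bf > 0\<close> by (intro mult_right_mono mult_mono) auto
    finally show ?thesis .
  qed
  then show ?thesis by (auto simp: bounded_iff)
qed

lemma transpose_uminus: "transpose (- A) = - transpose (A :: real^'n^'m)"
  by (simp add: transpose_def vec_eq_iff)

lemma sum_axis_scaleR:
  fixes F :: "'n::finite \<Rightarrow> 'a::real_vector"
  shows "(\<Sum>c\<in>UNIV. axis e (1::real) $ c *\<^sub>R F c) = F e"
  by (simp add: axis_def if_distrib[of "\<lambda>r. r *\<^sub>R _"] sum.delta' cong: if_cong)

lemma mat_one_row: "mat 1 $ e = axis e (1::real)"
  by (simp add: vec_eq_iff mat_def axis_def)

section \<open>The matrix exponential\<close>

definition matpow :: "real^'m^'m \<Rightarrow> nat \<Rightarrow> real^'m^'m" where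
  "matpow P k = (((**) P) ^^ k) (mat 1)"

lemma matpow_0 [simp]: "matpow P 0 = mat 1"
  by (simp add: matpow_def)

lemma matpow_Suc: "matpow P (Suc k) = P ** matpow P k"
  by (simp add: matpow_def)

lemma matpow_Suc_right: "matpow P (Suc k) = matpow P k ** P"
  by (induction k) (simp_all add: matpow_Suc matrix_mul_assoc)

lemma matpow_scaleR: "matpow (c *\<^sub>R P) k = (c ^ k) *\<^sub>R matpow P k"
  by (induction k) (simp_all add: matpow_Suc matrix_mult.scaleR_left matrix_mult.scaleR_right)

lemma norm_matpow_le:
  fixes P :: "real^'m^'m"
  obtains C K where "C \<ge> 0" "K \<ge> 0" "\<And>k. norm (matpow P k) \<le> C * K ^ k"
proof -
  obtain K where K: "K > 0" "\<And>A B. norm ((A::real^'m^'m) ** (B::real^'m^'m)) \<le> norm A * norm B * K"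
    using matrix_mult.pos_bounded by blast
  have "norm (matpow P k) \<le> norm (mat 1 :: real^'m^'m) * (norm P * K) ^ k" for k
  proof (induction k)
    case (Suc k)
    have "norm (matpow P (Suc k)) \<le> norm P * norm (matpow P k) * K"
      using K(2) by (simp add: matpow_Suc)
    also have "\<dots> \<le> norm P * (norm (mat 1 :: real^'m^'m) * (norm P * K) ^ k) * K"
      using Suc K(1) by (intro mult_right_mono mult_left_mono) auto
    finally show ?case by (simp add: algebra_simps)
  qed simp
  with K(1) show ?thesis
    by (intro that[of "norm (mat 1 :: real^'m^'m)" "norm P * K"]) auto
qed

lemma mat_exp_scaleR: "mat_exp (x *\<^sub>R P) = (\<Sum>k. (x ^ k / fact k) *\<^sub>R matpow P k)"
  unfolding mat_exp_def matpow_def[symmetric] matpow_scaleR by (simp add: divide_inverse mult.commute)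

lemma mat_exp_zero: "mat_exp 0 = mat 1"
proof -
  have "(\<lambda>k. ((0::real) ^ k / fact k) *\<^sub>R matpow P k) sums mat 1" for P :: "real^'m^'m"
    by (rule sums_single[of 0, THEN sums_cong[THEN iffD1, rotated]]) auto
  from sums_unique[OF this, of 0] show ?thesis
    by (metis mat_exp_scaleR scaleR_zero_left)
qed

lemma exp_series_summable:
  fixes c :: "nat \<Rightarrow> 'a::banach"
  assumes bound: "\<And>k. norm (c k) \<le> C * K ^ k"
  shows "summable (\<lambda>k. (x ^ k / fact k) *\<^sub>R c k)"
proof (rule summable_comparison_test)
  have "norm ((x ^ k / fact k) *\<^sub>R c k) \<le> C * (inverse (fact k) * (\<bar>x\<bar> * K) ^ k)" for k
  proof -
    have "norm ((x ^ k / fact k) *\<^sub>R c k) = \<bar>x\<bar> ^ k / fact k * norm (c k)"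
      by (simp add: power_abs)
    also have "\<dots> \<le> \<bar>x\<bar> ^ k / fact k * (C * K ^ k)"
      by (intro mult_left_mono bound) auto
    finally show ?thesis by (simp add: power_mult_distrib field_simps)
  qed
  then show "\<exists>N. \<forall>k\<ge>N. norm ((x ^ k / fact k) *\<^sub>R c k) \<le> C * (inverse (fact k) * (\<bar>x\<bar> * K) ^ k)"
    by blast
  show "summable (\<lambda>k. C * (inverse (fact k) * (\<bar>x\<bar> * K) ^ k))"
    by (intro summable_mult summable_exp)
qed

lemma exp_series_uniform_limit:
  fixes c :: "nat \<Rightarrow> 'a::banach"
  assumes bound: "\<And>k. norm (c k) \<le> C * K ^ k"
  shows "uniform_limit (cball 0 R) (\<lambda>n y. \<Sum>k<n. (y ^ k / fact k) *\<^sub>R c k)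
           (\<lambda>y. \<Sum>k. (y ^ k / fact k) *\<^sub>R c k) sequentially"
proof (rule Weierstrass_m_test)
  fix k and y :: real assume "y \<in> cball 0 R"
  then have "\<bar>y\<bar> ^ k \<le> \<bar>R\<bar> ^ k" by (intro power_mono) auto
  then have "norm ((y ^ k / fact k) *\<^sub>R c k) \<le> \<bar>R\<bar> ^ k / fact k * (C * K ^ k)"
    using bound[of k] by (auto simp: power_abs intro!: mult_mono divide_right_mono)
  then show "norm ((y ^ k / fact k) *\<^sub>R c k) \<le> C * (inverse (fact k) * (\<bar>R\<bar> * K) ^ k)"
    by (simp add: power_mult_distrib divide_inverse mult_ac)
next
  show "summable (\<lambda>k. C * (inverse (fact k) * (\<bar>R\<bar> * K) ^ k))"
    by (intro summable_mult summable_exp)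
qed
lemma exp_series_has_vector_derivative:
  fixes c :: "nat \<Rightarrow> 'a::banach"
  assumes bound: "\<And>k. norm (c k) \<le> C * K ^ k"
  shows "((\<lambda>y. \<Sum>k. (y ^ k / fact k) *\<^sub>R c k) has_vector_derivative
           (\<Sum>k. (x ^ k / fact k) *\<^sub>R c (Suc k))) (at x)"
proof -
  define S where "S = ball (0::real) (\<bar>x\<bar> + 1)"
  define f where "f k y = (y ^ Suc k / fact (Suc k)) *\<^sub>R c (Suc k)" for k y
  define a where "a k y = (y ^ k / fact k) *\<^sub>R c (Suc k)" for k y
  define A where "A = (\<lambda>y. \<Sum>k. a k y)"
  have xS: "x \<in> S" and convex: "convex S" and zero: "0 \<in> S"
    by (simp_all add: S_def)
  have "norm (c (Suc k)) \<le> (C * K) * K ^ k" for k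
    using bound[of "Suc k"] by (simp add: mult_ac)
  from uniform_limit_on_subset[OF exp_series_uniform_limit[OF this] ball_subset_cball]
  have ul: "uniform_limit S (\<lambda>n y. \<Sum>i<n. a i y) A sequentially"
    by (simp add: S_def A_def a_def)
  have unif: "\<forall>\<^sub>F n in sequentially. \<forall>y\<in>S. \<forall>h.
      norm ((\<Sum>i<n. h *\<^sub>R a i y) - h *\<^sub>R A y) \<le> e * norm h" if "e > 0" for e
  proof -
    from ul that have "\<forall>\<^sub>F n in sequentially. \<forall>y\<in>S. norm ((\<Sum>i<n. a i y) - A y) < e"
      by (simp add: uniform_limit_iff dist_norm)
    then show ?thesis
    proof eventually_elim
      case (elim n)
      have "norm ((\<Sum>i<n. h *\<^sub>R a i y) - h *\<^sub>R A y) \<le> \<bar>h\<bar> * e" if "y \<in> S" for y h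
        using elim that
        by (simp add: scaleR_sum_right[symmetric] scaleR_diff_right[symmetric] mult_left_mono less_imp_le)
      then show ?case by (simp add: mult.commute)
    qed
  qed
  have der: "(f n has_derivative (\<lambda>h. h *\<^sub>R a n y)) (at y within S)" for n y
  proof -
    have "((\<lambda>y. y ^ Suc n / fact (Suc n)) has_real_derivative y ^ n / fact n) (at y within S)"
      using DERIV_cdivide[OF DERIV_pow[of "Suc n" y S], of "fact (Suc n)"]
      by (simp del: of_nat_Suc)
    from has_vector_derivative_scaleR[OF this has_vector_derivative_const[of "c (Suc n)"]]
    have "(f n has_vector_derivative a n y) (at y within S)"
      by (simp only: f_def[abs_def] a_def scaleR_zero_right add_0_left)
    then show ?thesis by (simp add: has_vector_derivative_def)
  qed
  have "(\<lambda>n. f n 0) sums 0" by (simp add: f_def)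
  then obtain g where g: "\<And>y. y \<in> S \<Longrightarrow>
      (\<lambda>n. f n y) sums g y \<and> (g has_derivative (\<lambda>h. h *\<^sub>R A y)) (at y within S)"
    using has_derivative_series[of S f "\<lambda>n y h. h *\<^sub>R a n y" "\<lambda>y h. h *\<^sub>R A y",
        OF convex der unif zero] by blast
  have series: "(\<Sum>k. (y ^ k / fact k) *\<^sub>R c k) = c 0 + g y" if "y \<in> S" for y
  proof -
    have "(\<lambda>k. (y ^ Suc k / fact (Suc k)) *\<^sub>R c (Suc k)) sums g y"
      using g[OF that] by (simp add: f_def)
    from sums_Suc_iff[THEN iffD1, OF this] show ?thesis
      by (simp add: sums_unique[symmetric] add.commute)
  qed
  have "(g has_derivative (\<lambda>h. h *\<^sub>R A x)) (at x)"
    using g[OF xS] at_within_open[OF xS] by (simp add: S_def)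
  then have "((\<lambda>y. c 0 + g y) has_derivative (\<lambda>h. h *\<^sub>R A x)) (at x)"
    by (auto intro!: derivative_eq_intros)
  then have "((\<lambda>y. \<Sum>k. (y ^ k / fact k) *\<^sub>R c k) has_derivative (\<lambda>h. h *\<^sub>R A x)) (at x)"
    by (rule has_derivative_transform_within_open[OF _ _ xS]) (auto simp: S_def series)
  then show ?thesis
    by (simp add: has_vector_derivative_def A_def a_def)
qed

lemma mat_exp_has_vector_derivative:
  "((\<lambda>y. mat_exp (y *\<^sub>R P)) has_vector_derivative mat_exp (x *\<^sub>R P) ** P) (at x)"
proof -
  obtain C K where bound: "\<And>k. norm (matpow P k) \<le> C * K ^ k"
    using norm_matpow_le by blast
  have "(\<Sum>k. (x ^ k / fact k) *\<^sub>R matpow P (Suc k)) = (\<Sum>k. (x ^ k / fact k) *\<^sub>R matpow P k ** P)"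
    by (simp add: matpow_Suc_right matrix_mult.scaleR_left)
  also have "\<dots> = mat_exp (x *\<^sub>R P) ** P"
    unfolding mat_exp_scaleR
    by (rule bounded_linear.suminf[OF matrix_mult.bounded_linear_left exp_series_summable[OF bound],
          symmetric])
  finally have "(\<Sum>k. (x ^ k / fact k) *\<^sub>R matpow P (Suc k)) = mat_exp (x *\<^sub>R P) ** P" .
  with exp_series_has_vector_derivative[OF bound, where x=x] show ?thesis
    unfolding mat_exp_scaleR by simp
qed

lemma mat_exp_shift_has_vector_derivative:
  "((\<lambda>s. mat_exp ((s - t) *\<^sub>R P)) has_vector_derivative mat_exp ((s - t) *\<^sub>R P) ** P) (at s within T)"
proof -
  have "((\<lambda>s. s - t) has_vector_derivative 1) (at s)"
    by (auto intro!: derivative_eq_intros)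
  from vector_diff_chain_at[OF this mat_exp_has_vector_derivative]
  have "((\<lambda>s. mat_exp ((s - t) *\<^sub>R P)) has_vector_derivative mat_exp ((s - t) *\<^sub>R P) ** P) (at s)"
    by (simp add: o_def)
  then show ?thesis by (rule has_vector_derivative_at_within)
qed

lemma mat_exp_entry_has_real_derivative:
  fixes P :: "real^'k^'k"
  shows "((\<lambda>s. mat_exp ((s - t) *\<^sub>R P) $ i $ j) has_real_derivative
      (\<Sum>k\<in>UNIV. mat_exp ((s - t) *\<^sub>R P) $ i $ k * P $ k $ j)) (at s within T)"
proof -
  have "bounded_linear (\<lambda>A::real^'k^'k. A $ i $ j)"
    using bounded_linear_compose[OF bounded_linear_vec_nth bounded_linear_vec_nth] by blast
  from bounded_linear.has_vector_derivative[OF this mat_exp_shift_has_vector_derivative]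
  show ?thesis
    by (simp add: has_real_derivative_iff_has_vector_derivative matrix_matrix_mult_def)
qed

lemma ph_ccdf_axis: "ph_ccdf P (axis e 1) u = (\<Sum>c\<in>UNIV. mat_exp (u *\<^sub>R P) $ e $ c)"
  by (simp add: ph_ccdf_def matrix_vector_mult_def inner_axis' inner_commute)

lemma ph_pdf_axis:
  "ph_pdf P (axis e 1) u = (\<Sum>c\<in>UNIV. mat_exp (u *\<^sub>R P) $ e $ c * exit_vec P $ c)"
  by (simp add: ph_pdf_def matrix_vector_mult_def inner_axis' inner_commute)

lemma continuous_on_mat_exp_entry: "continuous_on T (\<lambda>s. mat_exp ((s - t) *\<^sub>R P) $ i $ j)"
proof (intro continuous_at_imp_continuous_on ballI)
  fix x
  show "isCont (\<lambda>s. mat_exp ((s - t) *\<^sub>R P) $ i $ j) x"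
    using mat_exp_entry_has_real_derivative[where s = x and T = UNIV] by (rule DERIV_isCont)
qed

lemma continuous_on_ph_pdf_axis: "continuous_on T (\<lambda>s. ph_pdf P (axis e 1) (s - t))"
  unfolding ph_pdf_axis by (intro continuous_on_sum continuous_on_mult_right continuous_on_mat_exp_entry)

section \<open>Integrals and derivatives on intervals\<close>

lemma piecewise_continuous_integrable_on:
  fixes f :: "real \<Rightarrow> 'a::euclidean_space"
  assumes bounded: "bounded (f ` {a..b})" and D: "finite D" and cont: "continuous_on ({a..b} - D) f"
  shows "f integrable_on {a..b}"
proof -
  obtain B where B: "\<forall>x\<in>{a..b}. norm (f x) \<le> B"
    using bounded by (auto simp: bounded_iff)
  have negD: "negligible D" using D by (rule negligible_finite)
  have S: "{a..b} - D \<in> sets lebesgue"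
    using negD by (intro sets.Diff) (auto intro: negligible_imp_sets)
  have B_integrable: "(\<lambda>_. B) integrable_on ({a..b} - D)"
    by (rule integrable_spike_set[OF integrable_const_ivl]) (auto intro: negligible_subset[OF negD])
  have "f integrable_on ({a..b} - D)"
    by (rule measurable_bounded_by_integrable_imp_integrable[OF _ B_integrable _ S])
       (auto intro: continuous_imp_measurable_on_sets_lebesgue[OF cont S] B[rule_format])
  then show ?thesis
    by (rule integrable_spike_set) (auto intro: negligible_subset[OF negD])
qed

lemma integral_tendsto_uniform_limit:
  fixes f :: "nat \<Rightarrow> real \<Rightarrow> 'a::banach"
  assumes "a \<le> b" and ul: "uniform_limit {a..b} f g sequentially"
    and f: "\<And>n. f n integrable_on {a..b}" and g: "g integrable_on {a..b}"
  shows "(\<lambda>n. integral {a..b} (f n)) \<longlonglongrightarrow> integral {a..b} g"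
proof (rule tendstoI)
  fix e :: real assume "e > 0"
  define e' where "e' = e / (b - a + 1)"
  have "e' > 0" using \<open>e > 0\<close> \<open>a \<le> b\<close> by (simp add: e'_def)
  with ul have "\<forall>\<^sub>F n in sequentially. \<forall>x\<in>{a..b}. dist (f n x) (g x) < e'"
    by (simp add: uniform_limit_iff)
  then show "\<forall>\<^sub>F n in sequentially. dist (integral {a..b} (f n)) (integral {a..b} g) < e"
  proof eventually_elim
    case (elim n)
    have "dist (integral {a..b} (f n)) (integral {a..b} g) = norm (integral {a..b} (\<lambda>x. f n x - g x))"
      using f g by (simp add: integral_diff dist_norm)
    also have "\<dots> \<le> integral {a..b} (\<lambda>x. e')"
      using elim f g
      by (intro integral_norm_bound_integral integrable_diff) (auto simp: dist_norm less_imp_le)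
    also have "\<dots> < e"
      using \<open>e > 0\<close> \<open>a \<le> b\<close> by (simp add: e'_def field_simps)
    finally show ?case .
  qed
qed

lemma has_integral_power_shift:
  fixes a s :: real
  assumes "a \<le> s"
  shows "((\<lambda>u. (u - a) ^ k) has_integral (s - a) ^ Suc k / Suc k) {a..s}"
proof -
  have "((\<lambda>u. (u - a) ^ k) has_integral ((s - a) ^ Suc k / Suc k - (a - a) ^ Suc k / Suc k)) {a..s}"
  proof (rule fundamental_theorem_of_calculus[OF assms])
    fix x assume "x \<in> {a..s}"
    have "((\<lambda>u. (u - a) ^ Suc k / Suc k) has_real_derivative (Suc k * ((x - a) ^ k * 1)) / Suc k)
        (at x within {a..s})"
      by (intro DERIV_cdivide DERIV_power_Suc[where n=k, THEN DERIV_cong] derivative_eq_intros) auto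
    then show "((\<lambda>u. (u - a) ^ Suc k / Suc k) has_vector_derivative (x - a) ^ k) (at x within {a..s})"
      by (simp add: has_real_derivative_iff_has_vector_derivative[symmetric])
  qed
  then show ?thesis by simp
qed

lemma at_within_Diff_finite:
  fixes x :: "'a::t1_space"
  assumes "finite D" "x \<notin> D"
  shows "at x within (T - D) = at x within T"
  by (rule at_within_nhd[of x "- D"]) (use assms in \<open>auto intro: open_Compl finite_imp_closed\<close>)

lemma has_vector_derivative_at_interior:
  assumes "(f has_vector_derivative f') (at x within {a..b})" "x \<in> {a<..<b}"
  shows "(f has_vector_derivative f') (at x)"
  using assms at_within_interior[of x "{a..b}"] by simp

lemma fundamental_theorem_of_calculus_split:
  fixes Z f g :: "real \<Rightarrow> 'a::banach"
  assumes "a \<le> b" "finite D" "continuous_on {a..b} Z"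
    and deriv: "\<And>s. s \<in> {a<..<b} - D \<Longrightarrow> (Z has_vector_derivative - (f s + g s)) (at s)"
    and g: "g integrable_on {a..b}"
  shows "Z a = Z b + integral {a..b} f + integral {a..b} g"
proof -
  have "((\<lambda>s. - (f s + g s)) has_integral (Z b - Z a)) {a..b}"
    using assms by (intro fundamental_theorem_of_calculus_interior_strong[OF _ _ deriv]) auto
  from has_integral_neg[OF this] have fg: "((\<lambda>s. f s + g s) has_integral (Z a - Z b)) {a..b}"
    by (simp only: minus_minus minus_diff_eq)
  then have "(\<lambda>s. (f s + g s) - g s) integrable_on {a..b}"
    using g by (intro integrable_diff) auto
  then have "f integrable_on {a..b}" by simp
  with fg g show ?thesis
    by (simp add: integral_add[symmetric] integral_unique algebra_simps)
qed

section \<open>Linear matrix differential equations\<close>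

definition principal_solution_on ::
    "(real \<Rightarrow> real^'n^'n) \<Rightarrow> real \<Rightarrow> real \<Rightarrow> (real \<Rightarrow> real^'n^'n) \<Rightarrow> bool" where
  "principal_solution_on M a b X \<longleftrightarrow> X a = mat 1 \<and> continuous_on {a..b} X \<and>
     (\<exists>D. finite D \<and> (\<forall>s\<in>{a..b} - D. (X has_vector_derivative M s ** X s) (at s within {a..b})))"

lemma principal_solution_on_subinterval:
  assumes "principal_solution_on M a b X" "s \<le> b"
  shows "principal_solution_on M a s X"
proof -
  obtain D where "finite D" "\<forall>u\<in>{a..b} - D. (X has_vector_derivative M u ** X u) (at u within {a..b})"
    using assms(1) by (auto simp: principal_solution_on_def)
  then have "\<forall>u\<in>{a..s} - D. (X has_vector_derivative M u ** X u) (at u within {a..s})"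
    using \<open>s \<le> b\<close> by (metis DiffD1 DiffD2 DiffI atLeastAtMost_iff atLeastatMost_subset_iff
        has_vector_derivative_within_subset order.refl order_trans)
  with assms \<open>finite D\<close> show ?thesis
    by (auto simp: principal_solution_on_def intro: continuous_on_subset)
qed

lemma adjoint_principal_solution_mult:
  assumes U: "principal_solution_on (\<lambda>u. - transpose (M u)) a s U"
    and Y: "principal_solution_on M a s Y" and "a \<le> s"
  shows "transpose (U s) ** Y s = mat 1"
proof -
  obtain DU DY where "finite DU" "finite DY"
    and dU: "\<forall>u\<in>{a..s} - DU. (U has_vector_derivative - transpose (M u) ** U u) (at u within {a..s})"
    and dY: "\<forall>u\<in>{a..s} - DY. (Y has_vector_derivative M u ** Y u) (at u within {a..s})"
    using U Y by (auto simp: principal_solution_on_def)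
  have "((\<lambda>_. 0) has_integral (transpose (U s) ** Y s - transpose (U a) ** Y a)) {a..s}"
  proof (rule fundamental_theorem_of_calculus_interior_strong[of "DU \<union> DY"])
    fix x assume x: "x \<in> {a<..<s} - (DU \<union> DY)"
    have "(U has_vector_derivative - transpose (M x) ** U x) (at x)"
      using dU x has_vector_derivative_at_interior[of U _ x a s] by auto
    from bounded_linear.has_vector_derivative[OF bounded_linear_transpose this]
    have "((\<lambda>u. transpose (U u)) has_vector_derivative - (transpose (U x) ** M x)) (at x)"
      by (simp add: matrix_transpose_mul transpose_uminus matrix_mult.minus_right)
    moreover have "(Y has_vector_derivative M x ** Y x) (at x)"
      using dY x has_vector_derivative_at_interior[of Y _ x a s] by auto
    ultimately show "((\<lambda>u. transpose (U u) ** Y u) has_vector_derivative 0) (at x)"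
      using matrix_mult.has_vector_derivative
      by (fastforce simp: matrix_mul_assoc matrix_mult.minus_left)
  next
    show "continuous_on {a..s} (\<lambda>u. transpose (U u) ** Y u)"
      using U Y by (intro matrix_mult.continuous_on bounded_linear.continuous_on[OF bounded_linear_transpose])
        (auto simp: principal_solution_on_def)
  qed (use \<open>finite DU\<close> \<open>finite DY\<close> \<open>a \<le> s\<close> in auto)
  then show ?thesis
    using U Y has_integral_unique[OF _ has_integral_0] by (fastforce simp: principal_solution_on_def)
qed

fun picard_iterate :: "(real \<Rightarrow> real^'n^'n) \<Rightarrow> real \<Rightarrow> nat \<Rightarrow> real \<Rightarrow> real^'n^'n" where
  "picard_iterate M a 0 = (\<lambda>s. mat 1)"
| "picard_iterate M a (Suc k) = (\<lambda>s. mat 1 + integral {a..s} (\<lambda>u. M u ** picard_iterate M a k u))"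

locale linear_matrix_ode =
  fixes M :: "real \<Rightarrow> real^'n^'n" and a b :: real and D :: "real set"
  assumes le_ab: "a \<le> b" and bounded_M: "bounded (M ` {a..b})"
    and finite_D: "finite D" and continuous_M: "continuous_on ({a..b} - D) M"
begin

lemma norm_mult_le:
  obtains K where "K \<ge> 0" "\<And>u Y. u \<in> {a..b} \<Longrightarrow> norm (M u ** (Y :: real^'n^'n)) \<le> K * norm Y"
proof -
  obtain Km where "Km > 0" and Km: "\<forall>u\<in>{a..b}. norm (M u) \<le> Km"
    using bounded_M by (auto simp: bounded_pos)
  obtain Kb where "Kb > 0" and Kb: "\<And>A Y. norm ((A::real^'n^'n) ** (Y::real^'n^'n)) \<le> norm A * norm Y * Kb"
    using matrix_mult.pos_bounded by blast
  have "norm (M u ** Y) \<le> Km * Kb * norm Y" if "u \<in> {a..b}" for u and Y :: "real^'n^'n"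
  proof -
    have "norm (M u ** Y) \<le> norm (M u) * norm Y * Kb" by (rule Kb)
    also have "\<dots> \<le> Km * norm Y * Kb"
      using Km that \<open>Kb > 0\<close> by (intro mult_right_mono) auto
    finally show ?thesis by (simp add: mult_ac)
  qed
  with \<open>Km > 0\<close> \<open>Kb > 0\<close> show ?thesis by (intro that[of "Km * Kb"]) auto
qed

lemma integrable_mult:
  assumes "continuous_on {a..b} Y" "s \<in> {a..b}"
  shows "(\<lambda>u. M u ** Y u) integrable_on {a..s}"
proof -
  have "bounded (Y ` {a..b})"
    using assms(1) by (intro compact_imp_bounded compact_continuous_image) auto
  then have "(\<lambda>u. M u ** Y u) integrable_on {a..b}"
    by (intro piecewise_continuous_integrable_on[OF _ finite_D] matrix_mult.bounded_image bounded_M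
        matrix_mult.continuous_on continuous_M continuous_on_subset[OF assms(1)]) auto
  then show ?thesis
    by (rule integrable_subinterval_real) (use assms(2) in auto)
qed

lemma continuous_on_picard_iterate: "continuous_on {a..b} (picard_iterate M a k)"
proof (induction k)
  case (Suc k)
  then show ?case
    unfolding picard_iterate.simps
    by (intro continuous_on_add continuous_on_const indefinite_integral_continuous_1
        integrable_mult) (use le_ab in auto)
qed simp

lemma picard_iterate_diff_le:
  assumes K0: "K \<ge> 0" and K: "\<And>u Y. u \<in> {a..b} \<Longrightarrow> norm (M u ** (Y :: real^'n^'n)) \<le> K * norm Y"
    and C: "\<And>s. s \<in> {a..b} \<Longrightarrow> norm (picard_iterate M a 1 s - picard_iterate M a 0 s) \<le> C"
    and s: "s \<in> {a..b}"
  shows "norm (picard_iterate M a (Suc k) s - picard_iterate M a k s) \<le> C * (K * (s - a)) ^ k / fact k"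
  using s
proof (induction k arbitrary: s)
  case 0
  then show ?case using C by simp
next
  case (Suc k)
  let ?X = "picard_iterate M a" and ?c = "K * C * K ^ k / fact k"
  have exp_term_Suc: "d ^ Suc k / Suc k * ?c = C * (K * d) ^ Suc k / fact (Suc k)" for d :: real
    by (simp add: power_mult_distrib fact_Suc field_simps del: of_nat_Suc)
  have intg: "(\<lambda>u. M u ** ?X j u) integrable_on {a..s}" for j
    using integrable_mult[OF continuous_on_picard_iterate Suc.prems] .
  have "?X (Suc (Suc k)) s - ?X (Suc k) s
      = integral {a..s} (\<lambda>u. M u ** ?X (Suc k) u) - integral {a..s} (\<lambda>u. M u ** ?X k u)"
    by simp
  also have "\<dots> = integral {a..s} (\<lambda>u. M u ** (?X (Suc k) u - ?X k u))"
    by (simp only: matrix_mult.diff_right integral_diff[OF intg intg])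
  also have "norm \<dots> \<le> integral {a..s} (\<lambda>u. (u - a) ^ k * ?c)"
  proof (rule integral_norm_bound_integral)
    show "(\<lambda>u. M u ** (?X (Suc k) u - ?X k u)) integrable_on {a..s}"
      unfolding matrix_mult.diff_right by (intro integrable_diff intg)
    show "(\<lambda>u. (u - a) ^ k * ?c) integrable_on {a..s}"
      using has_integral_power_shift[of a s k] Suc.prems by (auto intro: integrable_on_mult_left)
  next
    fix u assume "u \<in> {a..s}"
    then have u: "u \<in> {a..b}" using Suc.prems by auto
    have "norm (M u ** (?X (Suc k) u - ?X k u)) \<le> K * norm (?X (Suc k) u - ?X k u)"
      by (rule K[OF u])
    also have "\<dots> \<le> K * (C * (K * (u - a)) ^ k / fact k)"
      by (rule mult_left_mono[OF Suc.IH[OF u] K0])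
    finally show "norm (M u ** (?X (Suc k) u - ?X k u)) \<le> (u - a) ^ k * ?c"
      by (simp add: power_mult_distrib mult_ac)
  qed
  also have "\<dots> = (s - a) ^ Suc k / Suc k * ?c"
    using Suc.prems by (intro integral_unique has_integral_mult_left has_integral_power_shift) auto
  also have "\<dots> = C * (K * (s - a)) ^ Suc k / fact (Suc k)"
    using exp_term_Suc[of "s - a"] .
  finally show ?case .
qed

lemma picard_iterate_uniform_limit:
  obtains X where "uniform_limit {a..b} (picard_iterate M a) X sequentially"
proof -
  let ?d = "\<lambda>i s. picard_iterate M a (Suc i) s - picard_iterate M a i s"
  obtain K where "K \<ge> 0" and K: "\<And>u Y. u \<in> {a..b} \<Longrightarrow> norm (M u ** (Y :: real^'n^'n)) \<le> K * norm Y"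
    using norm_mult_le by blast
  have "bounded (?d 0 ` {a..b})"
    by (intro compact_imp_bounded compact_continuous_image continuous_on_diff
        continuous_on_picard_iterate) auto
  then obtain C where "C > 0" and C: "\<forall>s\<in>{a..b}. norm (?d 0 s) \<le> C"
    by (auto simp: bounded_pos)
  have "uniform_limit {a..b} (\<lambda>n s. \<Sum>i<n. ?d i s) (\<lambda>s. \<Sum>i. ?d i s) sequentially"
  proof (rule Weierstrass_m_test)
    fix n s assume s: "s \<in> {a..b}"
    have "norm (?d n s) \<le> C * (K * (s - a)) ^ n / fact n"
      using picard_iterate_diff_le[OF \<open>K \<ge> 0\<close> K _ s] C by simp
    also have "\<dots> \<le> C * (K * (b - a)) ^ n / fact n"
      using s \<open>C > 0\<close> \<open>K \<ge> 0\<close> by (intro divide_right_mono mult_left_mono power_mono) auto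
    finally show "norm (?d n s) \<le> C * (K * (b - a)) ^ n / fact n" .
  next
    show "summable (\<lambda>n. C * (K * (b - a)) ^ n / fact n)"
      using summable_mult[OF summable_exp[of "K * (b - a)"], of C] by (simp add: field_simps)
  qed
  then have "uniform_limit {a..b} (\<lambda>n s. mat 1 + (\<Sum>i<n. ?d i s)) (\<lambda>s. mat 1 + (\<Sum>i. ?d i s)) sequentially"
    by (intro uniform_limit_add uniform_limit_const)
  moreover have "(\<lambda>n s. mat 1 + (\<Sum>i<n. ?d i s)) = picard_iterate M a"
  proof (intro ext)
    fix n s
    show "mat 1 + (\<Sum>i<n. ?d i s) = picard_iterate M a n s"
      using sum_lessThan_telescope[of "\<lambda>i. picard_iterate M a i s" n] by simp
  qed
  ultimately show thesis by (intro that) simp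
qed

lemma integral_equation_imp_principal_solution:
  assumes X_cont: "continuous_on {a..b} X"
    and X_eq: "\<And>s. s \<in> {a..b} \<Longrightarrow> X s = mat 1 + integral {a..s} (\<lambda>u. M u ** X u)"
  shows "principal_solution_on M a b X"
proof -
  have "(X has_vector_derivative M s ** X s) (at s within {a..b})" if s: "s \<in> {a..b} - D" for s
  proof -
    have "continuous (at s within ({a..b} - D)) (\<lambda>u. M u ** X u)"
      using s continuous_on_eq_continuous_within
        matrix_mult.continuous_on[OF continuous_M continuous_on_subset[OF X_cont]] by blast
    then have "((\<lambda>u. integral {a..u} (\<lambda>u. M u ** X u)) has_vector_derivative M s ** X s)
        (at s within ({a..b} - D))"
      using integrable_mult[OF X_cont, of b] le_ab
      by (intro integral_has_vector_derivative_continuous_at[OF _ s finite_D]) auto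
    then have "((\<lambda>u. mat 1 + integral {a..u} (\<lambda>u. M u ** X u)) has_vector_derivative M s ** X s)
        (at s within {a..b})"
      using at_within_Diff_finite[OF finite_D, of s "{a..b}"] s by (auto intro!: derivative_eq_intros)
    then show ?thesis
      by (rule has_vector_derivative_transform_within[where d=1]) (use s X_eq in auto)
  qed
  moreover have "X a = mat 1" using X_eq[of a] le_ab by simp
  ultimately show ?thesis
    using X_cont finite_D unfolding principal_solution_on_def by blast
qed

lemma principal_solution_exists: "\<exists>X. principal_solution_on M a b X"
proof -
  obtain X where UL: "uniform_limit {a..b} (picard_iterate M a) X sequentially"
    by (rule picard_iterate_uniform_limit)
  have X_cont: "continuous_on {a..b} X"
    by (rule uniform_limit_theorem[OF _ UL]) (auto simp: continuous_on_picard_iterate)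
  have "X s = mat 1 + integral {a..s} (\<lambda>u. M u ** X u)" if s: "s \<in> {a..b}" for s
  proof (rule LIMSEQ_unique)
    show "(\<lambda>n. picard_iterate M a (Suc n) s) \<longlonglongrightarrow> X s"
      using tendsto_uniform_limitI[OF UL s] by (rule LIMSEQ_Suc)
    have sub: "{a..s} \<subseteq> {a..b}" using s by auto
    have "bounded (X ` {a..s})"
      by (intro compact_imp_bounded compact_continuous_image continuous_on_subset[OF X_cont sub]) auto
    moreover have "bounded (M ` {a..s})"
      using bounded_M sub by (meson bounded_subset image_mono)
    ultimately have "uniform_limit {a..s} (\<lambda>n u. M u ** picard_iterate M a n u) (\<lambda>u. M u ** X u) sequentially"
      by (intro matrix_mult.bounded_uniform_limit uniform_limit_const uniform_limit_on_subset[OF UL sub])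
    then have "(\<lambda>n. integral {a..s} (\<lambda>u. M u ** picard_iterate M a n u)) \<longlonglongrightarrow> integral {a..s} (\<lambda>u. M u ** X u)"
      using s by (intro integral_tendsto_uniform_limit integrable_mult continuous_on_picard_iterate X_cont) auto
    then show "(\<lambda>n. picard_iterate M a (Suc n) s) \<longlonglongrightarrow> mat 1 + integral {a..s} (\<lambda>u. M u ** X u)"
      by (simp add: tendsto_add)
  qed
  with X_cont show ?thesis
    by (blast intro: integral_equation_imp_principal_solution)
qed

lemma principal_solution_unique:
  assumes s: "s \<in> {a..b}" and X: "principal_solution_on M a s X" and Y: "principal_solution_on M a s Y"
  shows "X s = Y s"
proof -
  interpret adjoint: linear_matrix_ode "\<lambda>u. - transpose (M u)" a b D
  proof
    have "bounded ((\<lambda>A. - transpose A) ` M ` {a..b})"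
      by (intro bounded_linear_image bounded_M bounded_linear_minus bounded_linear_transpose)
    then show "bounded ((\<lambda>u. - transpose (M u)) ` {a..b})" by (simp add: image_image)
    show "continuous_on ({a..b} - D) (\<lambda>u. - transpose (M u))"
      by (intro continuous_on_minus bounded_linear.continuous_on[OF bounded_linear_transpose] continuous_M)
  qed (use le_ab finite_D in auto)
  obtain U where "principal_solution_on (\<lambda>u. - transpose (M u)) a b U"
    using adjoint.principal_solution_exists by blast
  then have U: "principal_solution_on (\<lambda>u. - transpose (M u)) a s U"
    using s by (auto intro: principal_solution_on_subinterval)
  have UX: "transpose (U s) ** X s = mat 1" and UY: "transpose (U s) ** Y s = mat 1"
    using s by (auto intro!: adjoint_principal_solution_mult[OF U] X Y)
  have "X s ** transpose (U s) = mat 1"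
    using UX matrix_left_right_inverse by blast
  then have "X s ** (transpose (U s) ** Y s) = Y s"
    by (metis matrix_mul_assoc matrix_mul_lid)
  then show ?thesis by (simp add: UY)
qed

lemma state_trans_eq:
  assumes X: "principal_solution_on M a b X" and s: "s \<in> {a..b}"
  shows "state_trans M s a = X s"
proof -
  have "state_trans M s a = (THE Y. \<exists>X. principal_solution_on M a s X \<and> X s = Y)"
    unfolding state_trans_def principal_solution_on_def
    by (intro arg_cong[where f = The] ext) (use s in \<open>auto simp: closed_segment_eq_real_ivl\<close>)
  also have "\<dots> = X s"
  proof (rule the_equality)
    show "\<exists>X'. principal_solution_on M a s X' \<and> X' s = X s"
      using principal_solution_on_subinterval[OF X] s by auto
    show "Y = X s" if "\<exists>X'. principal_solution_on M a s X' \<and> X' s = Y" for Y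
      using that principal_solution_unique[OF s] principal_solution_on_subinterval[OF X] s by force
  qed
  finally show ?thesis .
qed

end

lemma state_trans_principal_solution:
  assumes t: "t \<in> {a..b}"
    and M: "bounded (M ` {a..b})" "finite D" "continuous_on ({a..b} - D) M"
  obtains X where "principal_solution_on M t b X" "\<And>s. s \<in> {t..b} \<Longrightarrow> state_trans M s t = X s"
proof -
  have sub: "{t..b} \<subseteq> {a..b}" using t by auto
  interpret linear_matrix_ode M t b D
  proof
    show "bounded (M ` {t..b})" using M(1) sub by (meson bounded_subset image_mono)
    show "continuous_on ({t..b} - D) M" using sub by (intro continuous_on_subset[OF M(3)]) auto
  qed (use t M(2) in auto)
  from principal_solution_exists state_trans_eq that show ?thesis by blast
qed

section \<open>Coupled Lyapunov equations of a phase-type mode\<close>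

lemma weighted_sum_has_vector_derivative:
  fixes w :: "'k::finite \<Rightarrow> real \<Rightarrow> real" and \<Lambda> :: "'k \<Rightarrow> real \<Rightarrow> real^'n^'n"
    and P :: "real^'k^'k" and \<eta> :: "real^'k"
  assumes w: "\<And>c. (w c has_real_derivative (\<Sum>d\<in>UNIV. w d s * P $ d $ c)) (at s)"
    and \<Lambda>: "\<And>c. (\<Lambda> c has_vector_derivative
      - (transpose M ** \<Lambda> c s + \<Lambda> c s ** M + L + ((\<Sum>c'\<in>UNIV. P $ c $ c' *\<^sub>R \<Lambda> c' s) + \<eta> $ c *\<^sub>R L'))) (at s)"
  defines "W \<equiv> \<lambda>u. \<Sum>c\<in>UNIV. w c u *\<^sub>R \<Lambda> c u"
  shows "(W has_vector_derivative - (transpose M ** W s + W s ** M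
            + (\<Sum>c\<in>UNIV. w c s) *\<^sub>R L + (\<Sum>c\<in>UNIV. w c s * \<eta> $ c) *\<^sub>R L')) (at s)"
proof -
  let ?v = "\<lambda>c. \<Sum>d\<in>UNIV. w d s * P $ d $ c"
  let ?A = "\<lambda>c. w c s *\<^sub>R (transpose M ** \<Lambda> c s)"
  let ?B = "\<lambda>c. w c s *\<^sub>R (\<Lambda> c s ** M)"
  let ?C = "\<lambda>c. w c s *\<^sub>R (\<Sum>c'\<in>UNIV. P $ c $ c' *\<^sub>R \<Lambda> c' s)"
  have "(W has_vector_derivative (\<Sum>c\<in>UNIV. w c s *\<^sub>R
      - (transpose M ** \<Lambda> c s + \<Lambda> c s ** M + L + ((\<Sum>c'\<in>UNIV. P $ c $ c' *\<^sub>R \<Lambda> c' s) + \<eta> $ c *\<^sub>R L'))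
      + ?v c *\<^sub>R \<Lambda> c s)) (at s)"
    unfolding W_def by (intro has_vector_derivative_sum has_vector_derivative_scaleR \<Lambda> w)
  also have "(\<Sum>c\<in>UNIV. w c s *\<^sub>R
      - (transpose M ** \<Lambda> c s + \<Lambda> c s ** M + L + ((\<Sum>c'\<in>UNIV. P $ c $ c' *\<^sub>R \<Lambda> c' s) + \<eta> $ c *\<^sub>R L'))
      + ?v c *\<^sub>R \<Lambda> c s)
    = (\<Sum>c\<in>UNIV. ?v c *\<^sub>R \<Lambda> c s - ?C c - ?A c - ?B c - w c s *\<^sub>R L - (w c s * \<eta> $ c) *\<^sub>R L')"
    by (rule sum.cong) (simp_all add: algebra_simps)
  also have "\<dots> = (\<Sum>c\<in>UNIV. ?v c *\<^sub>R \<Lambda> c s) - sum ?C UNIV - sum ?A UNIV - sum ?B UNIV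
      - (\<Sum>c\<in>UNIV. w c s *\<^sub>R L) - (\<Sum>c\<in>UNIV. (w c s * \<eta> $ c) *\<^sub>R L')"
    by (simp only: sum_subtractf)
  also have "sum ?C UNIV = (\<Sum>c\<in>UNIV. ?v c *\<^sub>R \<Lambda> c s)"
  proof -
    have "sum ?C UNIV = (\<Sum>c\<in>UNIV. \<Sum>c'\<in>UNIV. (w c s * P $ c $ c') *\<^sub>R \<Lambda> c' s)"
      by (simp add: scaleR_sum_right)
    also have "\<dots> = (\<Sum>c'\<in>UNIV. \<Sum>c\<in>UNIV. (w c s * P $ c $ c') *\<^sub>R \<Lambda> c' s)"
      by (rule sum.swap)
    finally show ?thesis by (simp add: scaleR_sum_left)
  qed
  also have "sum ?A UNIV = transpose M ** W s"
    by (simp add: W_def matrix_mult.sum_right matrix_mult.scaleR_right)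
  also have "sum ?B UNIV = W s ** M"
    by (simp add: W_def matrix_mult.sum_left matrix_mult.scaleR_left)
  finally show ?thesis
    by (simp add: scaleR_sum_left)
qed

lemma congruence_has_vector_derivative:
  fixes X W :: "real \<Rightarrow> real^'n^'n"
  assumes X: "(X has_vector_derivative M ** X s) (at s)"
    and W: "(W has_vector_derivative - (transpose M ** W s + W s ** M + F)) (at s)"
  shows "((\<lambda>u. transpose (X u) ** W u ** X u) has_vector_derivative - (transpose (X s) ** F ** X s)) (at s)"
proof -
  have "((\<lambda>u. transpose (X u)) has_vector_derivative transpose (X s) ** transpose M) (at s)"
    using bounded_linear.has_vector_derivative[OF bounded_linear_transpose X]
    by (simp add: matrix_transpose_mul)
  from matrix_mult.has_vector_derivative[OF matrix_mult.has_vector_derivative[OF this W] X]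
  show ?thesis
    by (simp only: matrix_mult.add_right matrix_mult.add_left matrix_mult.minus_left
        matrix_mult.minus_right matrix_mul_assoc) (simp add: algebra_simps)
qed

lemma phase_row_weighted_sum_has_vector_derivative:
  fixes P :: "real^'k^'k" and \<Lambda> :: "'k \<Rightarrow> real \<Rightarrow> real^'n^'n" and e :: 'k and t :: real
  assumes "\<And>c. (\<Lambda> c has_vector_derivative
      - (transpose M ** \<Lambda> c s + \<Lambda> c s ** M + L
         + ((\<Sum>c'\<in>UNIV. P $ c $ c' *\<^sub>R \<Lambda> c' s) + exit_vec P $ c *\<^sub>R L'))) (at s)"
  defines "W \<equiv> \<lambda>u. \<Sum>c\<in>UNIV. mat_exp ((u - t) *\<^sub>R P) $ e $ c *\<^sub>R \<Lambda> c u"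
  shows "(W has_vector_derivative - (transpose M ** W s + W s ** M
      + (ph_ccdf P (axis e 1) (s - t) *\<^sub>R L + ph_pdf P (axis e 1) (s - t) *\<^sub>R L'))) (at s)"
  using weighted_sum_has_vector_derivative[where w = "\<lambda>c u. mat_exp ((u - t) *\<^sub>R P) $ e $ c",
      OF mat_exp_entry_has_real_derivative assms(1)]
  by (simp add: W_def ph_ccdf_axis ph_pdf_axis add.assoc)

lemma lyapunov_phase_type_representation:
  fixes M L L' :: "real \<Rightarrow> real^'n^'n" and P :: "real^'k^'k" and \<Lambda> :: "'k \<Rightarrow> real \<Rightarrow> real^'n^'n"
  assumes t: "t \<in> {a..b}"
    and M: "bounded (M ` {a..b})" "finite DM" "continuous_on ({a..b} - DM) M"
    and \<Lambda>_cont: "\<And>c. continuous_on {a..b} (\<Lambda> c)" and L'_cont: "continuous_on {a..b} L'"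
    and DL: "finite DL"
    and \<Lambda>_ode: "\<And>c s. s \<in> {a..b} - DL \<Longrightarrow> (\<Lambda> c has_vector_derivative
        - (transpose (M s) ** \<Lambda> c s + \<Lambda> c s ** M s + L s
           + ((\<Sum>c'\<in>UNIV. P $ c $ c' *\<^sub>R \<Lambda> c' s) + exit_vec P $ c *\<^sub>R L' s))) (at s within {a..b})"
    and \<Lambda>_final: "\<And>c. \<Lambda> c b = S"
  shows "\<Lambda> e t = ph_ccdf P (axis e 1) (b - t) *\<^sub>R
        (transpose (state_trans M b t) ** S ** state_trans M b t)
     + integral {t..b} (\<lambda>\<tau>. ph_ccdf P (axis e 1) (\<tau> - t) *\<^sub>R
        (transpose (state_trans M \<tau> t) ** L \<tau> ** state_trans M \<tau> t))
     + integral {t..b} (\<lambda>\<tau>. ph_pdf P (axis e 1) (\<tau> - t) *\<^sub>R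
        (transpose (state_trans M \<tau> t) ** L' \<tau> ** state_trans M \<tau> t))"
proof -
  obtain X where "principal_solution_on M t b X"
    and X_trans: "\<And>s. s \<in> {t..b} \<Longrightarrow> state_trans M s t = X s"
    using state_trans_principal_solution[OF t M] by blast
  then obtain DX where X1: "X t = mat 1" and X_cont: "continuous_on {t..b} X" and "finite DX"
    and X_ode: "\<forall>s\<in>{t..b} - DX. (X has_vector_derivative M s ** X s) (at s within {t..b})"
    unfolding principal_solution_on_def by blast
  have sub: "{t..b} \<subseteq> {a..b}" using t by auto
  define W where "W = (\<lambda>u. \<Sum>c\<in>UNIV. mat_exp ((u - t) *\<^sub>R P) $ e $ c *\<^sub>R \<Lambda> c u)"
  define Z where "Z = (\<lambda>s. transpose (X s) ** W s ** X s)"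
  define G1 where "G1 = (\<lambda>s. ph_ccdf P (axis e 1) (s - t) *\<^sub>R (transpose (X s) ** L s ** X s))"
  define G2 where "G2 = (\<lambda>s. ph_pdf P (axis e 1) (s - t) *\<^sub>R (transpose (X s) ** L' s ** X s))"
  have "(Z has_vector_derivative - (G1 s + G2 s)) (at s)" if s: "s \<in> {t<..<b} - (DX \<union> DL)" for s
  proof -
    have X': "(X has_vector_derivative M s ** X s) (at s)"
      using X_ode s has_vector_derivative_at_interior[of X _ s t b] by auto
    have \<Lambda>': "(\<Lambda> c has_vector_derivative
        - (transpose (M s) ** \<Lambda> c s + \<Lambda> c s ** M s + L s
           + ((\<Sum>c'\<in>UNIV. P $ c $ c' *\<^sub>R \<Lambda> c' s) + exit_vec P $ c *\<^sub>R L' s))) (at s)" for c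
      using \<Lambda>_ode[of s c] s t has_vector_derivative_at_interior[of "\<Lambda> c" _ s a b] by auto
    have "((\<lambda>u. transpose (X u) ** W u ** X u) has_vector_derivative - (transpose (X s) **
        (ph_ccdf P (axis e 1) (s - t) *\<^sub>R L s + ph_pdf P (axis e 1) (s - t) *\<^sub>R L' s) ** X s)) (at s)"
      unfolding W_def
      by (rule congruence_has_vector_derivative[OF X' phase_row_weighted_sum_has_vector_derivative[OF \<Lambda>']])
    then show ?thesis
      by (simp add: Z_def G1_def G2_def matrix_mult.add_left matrix_mult.add_right
          matrix_mult.scaleR_left matrix_mult.scaleR_right)
  qed
  moreover have "continuous_on {t..b} Z"
    unfolding Z_def W_def
    by (intro matrix_mult.continuous_on bounded_linear.continuous_on[OF bounded_linear_transpose]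
        X_cont continuous_on_sum continuous_on_scaleR continuous_on_subset[OF \<Lambda>_cont sub]
        continuous_on_mat_exp_entry)
  moreover have "G2 integrable_on {t..b}"
    unfolding G2_def
    by (intro integrable_continuous_interval continuous_on_scaleR continuous_on_ph_pdf_axis
        matrix_mult.continuous_on bounded_linear.continuous_on[OF bounded_linear_transpose]
        X_cont continuous_on_subset[OF L'_cont sub])
  ultimately have "Z t = Z b + integral {t..b} G1 + integral {t..b} G2"
    using t \<open>finite DX\<close> DL by (intro fundamental_theorem_of_calculus_split[of _ _ "DX \<union> DL"]) auto
  moreover have "Z t = \<Lambda> e t"
    by (simp add: Z_def W_def X1 mat_exp_zero mat_one_row sum_axis_scaleR)
  moreover have "Z b = ph_ccdf P (axis e 1) (b - t) *\<^sub>R (transpose (X b) ** S ** X b)"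
    by (simp add: Z_def W_def \<Lambda>_final ph_ccdf_axis scaleR_sum_left[symmetric]
        matrix_mult.scaleR_left matrix_mult.scaleR_right)
  moreover have "integral {t..b} (\<lambda>\<tau>. ph_ccdf P (axis e 1) (\<tau> - t) *\<^sub>R
        (transpose (state_trans M \<tau> t) ** L \<tau> ** state_trans M \<tau> t)) = integral {t..b} G1"
    and "integral {t..b} (\<lambda>\<tau>. ph_pdf P (axis e 1) (\<tau> - t) *\<^sub>R
        (transpose (state_trans M \<tau> t) ** L' \<tau> ** state_trans M \<tau> t)) = integral {t..b} G2"
    by (auto intro!: integral_cong simp: G1_def G2_def X_trans)
  ultimately show ?thesis
    using X_trans[of b] t by simp
qed

section \<open>The two-mode semi-Markov system\<close>

lemma bpc_on_feedback:
  fixes A :: "real \<Rightarrow> real^'n^'m" and B :: "real \<Rightarrow> real^'q^'m" and G :: "real \<Rightarrow> real^'n^'q"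
  assumes "bpc_on a b A" "bpc_on a b B" "bpc_on a b G"
  obtains D where "finite D" "bounded ((\<lambda>s. A s + B s ** G s) ` {a..b})"
    "continuous_on ({a..b} - D) (\<lambda>s. A s + B s ** G s)"
proof -
  obtain DA DB DG where "finite DA" "finite DB" "finite DG"
    and "continuous_on ({a..b} - DA) A" "continuous_on ({a..b} - DB) B" "continuous_on ({a..b} - DG) G"
    and "bounded (A ` {a..b})" "bounded (B ` {a..b})" "bounded (G ` {a..b})"
    using assms unfolding bpc_on_def by metis
  then have "continuous_on ({a..b} - (DA \<union> DB \<union> DG)) (\<lambda>s. A s + B s ** G s)"
    and "bounded ((\<lambda>s. A s + B s ** G s) ` {a..b})"
    by (auto intro!: continuous_on_add matrix_mult.continuous_on bounded_plus_comp matrix_mult.bounded_image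
        elim: continuous_on_subset)
  with \<open>finite DA\<close> \<open>finite DB\<close> \<open>finite DG\<close> show ?thesis
    by (intro that[of "DA \<union> DB \<union> DG"]) auto
qed

lemma pibar_row_Inl:
  fixes F :: "'m::finite + 'p::finite \<Rightarrow> 'a::real_vector"
  shows "(\<Sum>j\<in>UNIV. pibar Pa \<alpha>a Pb \<alpha>b $ Inl r $ j *\<^sub>R F j)
    = (\<Sum>c\<in>UNIV. Pa $ r $ c *\<^sub>R F (Inl c)) + exit_vec Pa $ r *\<^sub>R (\<Sum>c\<in>UNIV. \<alpha>b $ c *\<^sub>R F (Inr c))"
  by (simp add: UNIV_Plus_UNIV[symmetric] sum.Plus pibar_def scaleR_sum_right del: UNIV_Plus_UNIV)

lemma pibar_row_Inr:
  fixes F :: "'m::finite + 'p::finite \<Rightarrow> 'a::real_vector"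
  shows "(\<Sum>j\<in>UNIV. pibar Pa \<alpha>a Pb \<alpha>b $ Inr r $ j *\<^sub>R F j)
    = (\<Sum>c\<in>UNIV. Pb $ r $ c *\<^sub>R F (Inr c)) + exit_vec Pb $ r *\<^sub>R (\<Sum>c\<in>UNIV. \<alpha>a $ c *\<^sub>R F (Inl c))"
  by (simp add: UNIV_Plus_UNIV[symmetric] sum.Plus pibar_def scaleR_sum_right add.commute
      del: UNIV_Plus_UNIV)

theorem theorem3:
  fixes tf :: real
    and A1 A2 Q1 Q2 :: "real \<Rightarrow> real^'n^'n"
    and B1 B2 :: "real \<Rightarrow> real^'q^'n"
    and \<Gamma>1 \<Gamma>2 :: "real \<Rightarrow> real^'n^'q"
    and R1 R2 :: "real \<Rightarrow> real^'q^'q"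
    and S1 S2 :: "real^'n^'n"
    and Pa :: "real^('m::{finite,wellorder})^('m::{finite,wellorder})"
    and Pb :: "real^('p::{finite,wellorder})^('p::{finite,wellorder})"
    and \<Lambda> :: "('m::{finite,wellorder}) + ('p::{finite,wellorder}) \<Rightarrow> real \<Rightarrow> real^'n^'n"
  assumes tf_pos: "tf > 0"
    and pc: "bpc_on 0 tf A1" "bpc_on 0 tf A2" "bpc_on 0 tf B1" "bpc_on 0 tf B2"
            "bpc_on 0 tf \<Gamma>1" "bpc_on 0 tf \<Gamma>2" "bpc_on 0 tf Q1" "bpc_on 0 tf Q2"
            "bpc_on 0 tf R1" "bpc_on 0 tf R2"
    and sub: "subgenerator Pa" "subgenerator Pb"
    and Lam_cont: "\<And>i. continuous_on {0..tf} (\<Lambda> i)"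
    and Lam_ode: "\<exists>D. finite D \<and> (\<forall>i. \<forall>s\<in>{0..tf} - D.
        ((\<Lambda> i) has_vector_derivative
           (let Ab = (case i of Inl _ \<Rightarrow> A1 s + B1 s ** \<Gamma>1 s | Inr _ \<Rightarrow> A2 s + B2 s ** \<Gamma>2 s);
                L = (case i of Inl _ \<Rightarrow> Q1 s + transpose (\<Gamma>1 s) ** R1 s ** \<Gamma>1 s
                             | Inr _ \<Rightarrow> Q2 s + transpose (\<Gamma>2 s) ** R2 s ** \<Gamma>2 s)
            in - (transpose Ab ** \<Lambda> i s + \<Lambda> i s ** Ab + L
                  + (\<Sum>j\<in>UNIV. pibar Pa first_unit Pb first_unit $ i $ j *\<^sub>R \<Lambda> j s))))
          (at s within {0..tf}))"
    and Lam_final: "\<And>r. \<Lambda> (Inl r) tf = S1" "\<And>c. \<Lambda> (Inr c) tf = S2"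
  shows "\<forall>t\<in>{0..tf}.
    (let Ab1 = (\<lambda>s. A1 s + B1 s ** \<Gamma>1 s);
         L1 = (\<lambda>s. Q1 s + transpose (\<Gamma>1 s) ** R1 s ** \<Gamma>1 s);
         Ab2 = (\<lambda>s. A2 s + B2 s ** \<Gamma>2 s);
         L2 = (\<lambda>s. Q2 s + transpose (\<Gamma>2 s) ** R2 s ** \<Gamma>2 s);
         \<alpha>a = first_unit; \<alpha>b = first_unit
     in \<Lambda> (Inl first_phase) t =
          ph_ccdf Pa \<alpha>a (tf - t) *\<^sub>R
            (transpose (state_trans Ab1 tf t) ** S1 ** state_trans Ab1 tf t)
        + integral {t..tf} (\<lambda>\<tau>. ph_ccdf Pa \<alpha>a (\<tau> - t) *\<^sub>R
            (transpose (state_trans Ab1 \<tau> t) ** L1 \<tau> ** state_trans Ab1 \<tau> t))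
        + integral {t..tf} (\<lambda>\<tau>. ph_pdf Pa \<alpha>a (\<tau> - t) *\<^sub>R
            (transpose (state_trans Ab1 \<tau> t) ** \<Lambda> (Inr first_phase) \<tau> ** state_trans Ab1 \<tau> t))
      \<and> \<Lambda> (Inr first_phase) t =
          ph_ccdf Pb \<alpha>b (tf - t) *\<^sub>R
            (transpose (state_trans Ab2 tf t) ** S2 ** state_trans Ab2 tf t)
        + integral {t..tf} (\<lambda>\<tau>. ph_ccdf Pb \<alpha>b (\<tau> - t) *\<^sub>R
            (transpose (state_trans Ab2 \<tau> t) ** L2 \<tau> ** state_trans Ab2 \<tau> t))
        + integral {t..tf} (\<lambda>\<tau>. ph_pdf Pb \<alpha>b (\<tau> - t) *\<^sub>R
            (transpose (state_trans Ab2 \<tau> t) ** \<Lambda> (Inl first_phase) \<tau> ** state_trans Ab2 \<tau> t)))"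
proof -
  define Ab1 where "Ab1 = (\<lambda>s. A1 s + B1 s ** \<Gamma>1 s)"
  define Ab2 where "Ab2 = (\<lambda>s. A2 s + B2 s ** \<Gamma>2 s)"
  define L1 where "L1 = (\<lambda>s. Q1 s + transpose (\<Gamma>1 s) ** R1 s ** \<Gamma>1 s)"
  define L2 where "L2 = (\<lambda>s. Q2 s + transpose (\<Gamma>2 s) ** R2 s ** \<Gamma>2 s)"
  obtain D1 where D1: "finite D1" "bounded (Ab1 ` {0..tf})" "continuous_on ({0..tf} - D1) Ab1"
    unfolding Ab1_def using bpc_on_feedback[OF pc(1,3,5)] by blast
  obtain D2 where D2: "finite D2" "bounded (Ab2 ` {0..tf})" "continuous_on ({0..tf} - D2) Ab2"
    unfolding Ab2_def using bpc_on_feedback[OF pc(2,4,6)] by blast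
  obtain DL where "finite DL"
    and ode_a: "\<And>c s. s \<in> {0..tf} - DL \<Longrightarrow> (\<Lambda> (Inl c) has_vector_derivative
      - (transpose (Ab1 s) ** \<Lambda> (Inl c) s + \<Lambda> (Inl c) s ** Ab1 s + L1 s
         + ((\<Sum>c'\<in>UNIV. Pa $ c $ c' *\<^sub>R \<Lambda> (Inl c') s) + exit_vec Pa $ c *\<^sub>R \<Lambda> (Inr first_phase) s)))
      (at s within {0..tf})"
    and ode_b: "\<And>c s. s \<in> {0..tf} - DL \<Longrightarrow> (\<Lambda> (Inr c) has_vector_derivative
      - (transpose (Ab2 s) ** \<Lambda> (Inr c) s + \<Lambda> (Inr c) s ** Ab2 s + L2 s
         + ((\<Sum>c'\<in>UNIV. Pb $ c $ c' *\<^sub>R \<Lambda> (Inr c') s) + exit_vec Pb $ c *\<^sub>R \<Lambda> (Inl first_phase) s)))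
      (at s within {0..tf})"
    using Lam_ode unfolding split_sum_all
    by (simp only: Let_def sum.case Ab1_def Ab2_def L1_def L2_def pibar_row_Inl pibar_row_Inr
        first_unit_def sum_axis_scaleR) blast
  note rep_a = lyapunov_phase_type_representation[OF _ D1(2,1,3) Lam_cont Lam_cont \<open>finite DL\<close>
      ode_a Lam_final(1), of _ first_phase]
  note rep_b = lyapunov_phase_type_representation[OF _ D2(2,1,3) Lam_cont Lam_cont \<open>finite DL\<close>
      ode_b Lam_final(2), of _ first_phase]
  show ?thesis
    using rep_a rep_b unfolding Let_def first_unit_def Ab1_def Ab2_def L1_def L2_def by blast
qed

end
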